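(* Consider the $2$-peakon dynamical system on the $6$-dimensional phase space with coordinates $(a_1,a_2,b_1,b_2,q_1,q_2)$, with Hamiltonian $h=2(a_1+a_2+b_1+b_2)$ and Poisson bracket defined, for $j,k\in\{1,2\}$, by $$\{a_j,a_k\}=2a_ja_k\,\mathrm{sgn}(q_j-q_k)e^{-|q_j-q_k|},\quad \{b_j,b_k\}=\tfrac12 b_jb_k\,\mathrm{sgn}(q_j-q_k)e^{-|q_j-q_k|},$$ $$\{q_j,q_k\}=\tfrac12\mathrm{sgn}(q_j-q_k)\big(1-e^{-|q_j-q_k|}\big),\quad \{q_j,a_k\}=a_ke^{-|q_j-q_k|},\quad \{q_j,b_k\}=\tfrac12 b_ke^{-|q_j-q_k|},$$ $$\{a_j,b_k\}=a_jb_k\,\mathrm{sgn}(q_j-q_k)e^{-|q_j-q_k|}$$ (remaining brackets by antisymmetry). Then the function $J=b_1b_2\big(1-e^{-|q_1-q_2|}\big)$ is independent of $h$ and the Casimirs $\mathcal C_j=a_j/b_j^2$, and satisfies $\{J,h\}=0$; consequently this $2$-peakon system is completely integrable in the Liouville sense.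
   Context: This system describes $2$-peakon solutions $u=\sum_{j=1}^2 a_je^{-|x-q_j|}$, $v=\sum_{j=1}^2 b_je^{-|x-q_j|}$ of the Popowicz system $m_t+m_x(2u+v)+3m(2u_x+v_x)=0$, $n_t+n_x(2u+v)+2n(2u_x+v_x)=0$, $m=u-u_{xx}$, $n=v-v_{xx}$. Convention: $\mathrm{sgn}(0)=0$. The bracket is extended to functions by bilinearity, antisymmetry and the Leibniz rule; $\mathcal C_1,\mathcal C_2$ are Casimirs (Poisson-commute with every function), so the motion is on $4$-dimensional symplectic leaves. *)

theory Defs
  imports "HOL-Analysis.Analysis"
begin

datatype pk = P1 | P2
datatype coord = A pk | B pk | Q pk

lemma UNIV_pk: "(UNIV :: pk set) = {P1, P2}"
  using pk.exhaust by auto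

lemma UNIV_coord: "(UNIV :: coord set) = {A P1, A P2, B P1, B P2, Q P1, Q P2}"
proof -
  have "c \<in> {A P1, A P2, B P1, B P2, Q P1, Q P2}" for c :: coord
    by (cases c; metis UNIV_pk insertE empty_iff insert_iff UNIV_I)
  then show ?thesis by auto
qed

instance coord :: finite
  by standard (simp add: UNIV_coord)

type_synonym phase = "real ^ coord"

definition aa :: "phase \<Rightarrow> pk \<Rightarrow> real" where "aa x j = x $ A j"
definition bb :: "phase \<Rightarrow> pk \<Rightarrow> real" where "bb x j = x $ B j"
definition qq :: "phase \<Rightarrow> pk \<Rightarrow> real" where "qq x j = x $ Q j"

text \<open>e^{-|q_j-q_k|} and sgn(q_j-q_k) (with sgn 0 = 0, as for Isabelle's sgn).\<close>
definition EE :: "phase \<Rightarrow> pk \<Rightarrow> pk \<Rightarrow> real" where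
  "EE x j k = exp (- \<bar>qq x j - qq x k\<bar>)"
definition SS :: "phase \<Rightarrow> pk \<Rightarrow> pk \<Rightarrow> real" where
  "SS x j k = sgn (qq x j - qq x k)"

fun PB :: "phase \<Rightarrow> coord \<Rightarrow> coord \<Rightarrow> real" where
  "PB x (A j) (A k) = 2 * aa x j * aa x k * SS x j k * EE x j k"
| "PB x (B j) (B k) = 1/2 * bb x j * bb x k * SS x j k * EE x j k"
| "PB x (Q j) (Q k) = 1/2 * SS x j k * (1 - EE x j k)"
| "PB x (Q j) (A k) = aa x k * EE x j k"
| "PB x (A k) (Q j) = - (aa x k * EE x j k)"
| "PB x (Q j) (B k) = 1/2 * bb x k * EE x j k"
| "PB x (B k) (Q j) = - (1/2 * bb x k * EE x j k)"
| "PB x (A j) (B k) = aa x j * bb x k * SS x j k * EE x j k"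
| "PB x (B k) (A j) = - (aa x j * bb x k * SS x j k * EE x j k)"

definition pd :: "(phase \<Rightarrow> real) \<Rightarrow> coord \<Rightarrow> phase \<Rightarrow> real" where
  "pd F c x = frechet_derivative F (at x) (axis c 1)"

text \<open>Poisson bracket of functions (bilinearity + Leibniz rule).\<close>
definition poisson :: "(phase \<Rightarrow> real) \<Rightarrow> (phase \<Rightarrow> real) \<Rightarrow> phase \<Rightarrow> real" where
  "poisson F G x = (\<Sum>c\<in>UNIV. \<Sum>d\<in>UNIV. pd F c x * PB x c d * pd G d x)"

definition ham :: "phase \<Rightarrow> real" where
  "ham x = 2 * (aa x P1 + aa x P2 + bb x P1 + bb x P2)"

definition Jfun :: "phase \<Rightarrow> real" where
  "Jfun x = bb x P1 * bb x P2 * (1 - exp (- \<bar>qq x P1 - qq x P2\<bar>))"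

definition Cas :: "pk \<Rightarrow> phase \<Rightarrow> real" where
  "Cas j x = aa x j / (bb x j)\<^sup>2"

definition indep_diff4 :: "(phase \<Rightarrow> real) \<Rightarrow> (phase \<Rightarrow> real) \<Rightarrow> (phase \<Rightarrow> real)
    \<Rightarrow> (phase \<Rightarrow> real) \<Rightarrow> phase \<Rightarrow> bool" where
  "indep_diff4 F1 F2 F3 F4 x \<longleftrightarrow>
     F1 differentiable (at x) \<and> F2 differentiable (at x) \<and>
     F3 differentiable (at x) \<and> F4 differentiable (at x) \<and>
     (\<forall>c1 c2 c3 c4 :: real.
        (\<forall>v. c1 * frechet_derivative F1 (at x) v + c2 * frechet_derivative F2 (at x) v
            + c3 * frechet_derivative F3 (at x) v + c4 * frechet_derivative F4 (at x) v = 0)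
        \<longrightarrow> c1 = 0 \<and> c2 = 0 \<and> c3 = 0 \<and> c4 = 0)"

text \<open>Natural domain: Casimirs need b_j nonzero, J is smooth only off q1 = q2.\<close>
definition Dom :: "phase set" where
  "Dom = {x. bb x P1 \<noteq> 0 \<and> bb x P2 \<noteq> 0 \<and> qq x P1 \<noteq> qq x P2}"

end

theory Submission imports Defs begin

text \<open>For independence,
only dJ has a dq-component, while dh lies in the span of dC1, dC2 exactly when
b_j + 2a_j = 0 for both j; this exceptional set is closed with empty interior in the
natural domain, so independence holds on an open dense subset of it.\<close>

lemma pd_eq_derivative:
  assumes "(F has_derivative L) (at x)"
  shows "pd F c x = L (axis c 1)"
  using frechet_derivative_at[OF assms] by (simp add: pd_def)

lemma has_derivative_coord [derivative_intros]:
  "((\<lambda>y::phase. y $ c) has_derivative (\<lambda>v. v $ c)) (at x)"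
  by (rule bounded_linear.has_derivative[OF bounded_linear_vec_nth has_derivative_ident])

lemma sum_UNIV_coord:
  "(\<Sum>c\<in>UNIV. f c) = f (A P1) + f (A P2) + f (B P1) + f (B P2) + f (Q P1) + f (Q P2)"
  for f :: "coord \<Rightarrow> 'a::comm_monoid_add"
  by (simp add: UNIV_coord add.assoc)

lemma EE_same [simp]: "EE x j j = 1"
  and EE_swap: "EE x P2 P1 = EE x P1 P2"
  by (auto simp: EE_def abs_minus_commute)

lemma SS_same [simp]: "SS x j j = 0"
  and SS_swap: "SS x P2 P1 = - SS x P1 P2"
  by (auto simp: SS_def sgn_minus[symmetric])

definition dJfun :: "phase \<Rightarrow> phase \<Rightarrow> real" where
  "dJfun x v = bb x P2 * (1 - EE x P1 P2) * v $ B P1 + bb x P1 * (1 - EE x P1 P2) * v $ B P2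
    + bb x P1 * bb x P2 * EE x P1 P2 * SS x P1 P2 * (v $ Q P1 - v $ Q P2)"

definition dham :: "phase \<Rightarrow> real" where
  "dham v = 2 * (v $ A P1 + v $ A P2 + v $ B P1 + v $ B P2)"

definition dCas :: "pk \<Rightarrow> phase \<Rightarrow> phase \<Rightarrow> real" where
  "dCas j x v = v $ A j / (bb x j)\<^sup>2 - 2 * aa x j * v $ B j / (bb x j) ^ 3"

lemma has_derivative_Jfun:
  assumes "qq x P1 \<noteq> qq x P2"
  shows "(Jfun has_derivative dJfun x) (at x)"
proof -
  define s where "s = sgn (qq x P1 - qq x P2)"
  define U where "U = {y::phase. 0 < s * (y $ Q P1 - y $ Q P2)}"
  define g where "g y = y $ B P1 * y $ B P2 * (1 - exp (- (s * (y $ Q P1 - y $ Q P2))))"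
    for y :: phase
  \<comment> \<open>Near x the sign of q1 - q2 is frozen, so J agrees with the smooth function g.\<close>
  have abs_x: "\<bar>x $ Q P1 - x $ Q P2\<bar> = s * (x $ Q P1 - x $ Q P2)"
    and sgn_x: "sgn (x $ Q P1 - x $ Q P2) = s"
    using assms by (auto simp: s_def sgn_if qq_def)
  have "(g has_derivative (\<lambda>v. v $ B P1 * x $ B P2 * (1 - exp (- (s * (x $ Q P1 - x $ Q P2))))
      + x $ B P1 * v $ B P2 * (1 - exp (- (s * (x $ Q P1 - x $ Q P2))))
      + x $ B P1 * x $ B P2 * (exp (- (s * (x $ Q P1 - x $ Q P2))) * (s * (v $ Q P1 - v $ Q P2)))))
    (at x)"
    unfolding g_def by (rule has_derivative_eq_rhs, (rule derivative_intros)+, auto simp: algebra_simps)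
  then have "(g has_derivative dJfun x) (at x)"
    by (rule has_derivative_eq_rhs)
      (auto simp: dJfun_def EE_def SS_def bb_def qq_def abs_x sgn_x algebra_simps)
  moreover have "open U"
    unfolding U_def by (rule open_Collect_less; intro continuous_intros)
  moreover have "x \<in> U"
    using assms by (auto simp: U_def s_def sgn_if qq_def)
  moreover have "g y = Jfun y" if "y \<in> U" for y
  proof -
    have "\<bar>y $ Q P1 - y $ Q P2\<bar> = s * (y $ Q P1 - y $ Q P2)"
      using that by (auto simp: U_def s_def sgn_if abs_if split: if_splits)
    then show ?thesis by (simp add: g_def Jfun_def bb_def qq_def)
  qed
  ultimately show ?thesis by (rule has_derivative_transform_within_open)
qed

lemma has_derivative_ham: "(ham has_derivative dham) (at x)"
  unfolding ham_def aa_def bb_def dham_def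
  by (rule has_derivative_eq_rhs, (rule derivative_intros)+, auto)

lemma has_derivative_Cas:
  assumes "bb x j \<noteq> 0"
  shows "(Cas j has_derivative dCas j x) (at x)"
proof -
  have b: "x $ B j \<noteq> 0" using assms by (simp add: bb_def)
  show ?thesis
    unfolding Cas_def aa_def bb_def
    by (rule has_derivative_eq_rhs[OF has_derivative_divide[OF has_derivative_coord
          has_derivative_power[OF has_derivative_coord]]])
      (use b in \<open>auto simp: dCas_def bb_def aa_def field_simps power2_eq_square power3_eq_cube\<close>)
qed

lemma poisson_Jfun_ham:
  assumes "qq x P1 \<noteq> qq x P2"
  shows "poisson Jfun ham x = 0"
  unfolding poisson_def pd_eq_derivative[OF has_derivative_Jfun[OF assms]]
    pd_eq_derivative[OF has_derivative_ham] sum_UNIV_coord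
  by (simp add: dJfun_def dham_def axis_def EE_swap SS_swap algebra_simps field_simps)

lemma indep_diff4_Dom_iff:
  assumes "x \<in> Dom"
  shows "indep_diff4 Jfun ham (Cas P1) (Cas P2) x \<longleftrightarrow>
    bb x P1 + 2 * aa x P1 \<noteq> 0 \<or> bb x P2 + 2 * aa x P2 \<noteq> 0"
proof -
  have b1: "bb x P1 \<noteq> 0" and b2: "bb x P2 \<noteq> 0" and q: "qq x P1 \<noteq> qq x P2"
    using assms by (auto simp: Dom_def)
  note dJ = has_derivative_Jfun[OF q] and dH = has_derivative_ham[of x]
    and dC1 = has_derivative_Cas[OF b1] and dC2 = has_derivative_Cas[OF b2]
  have indep_iff: "indep_diff4 Jfun ham (Cas P1) (Cas P2) x \<longleftrightarrow>
      (\<forall>c1 c2 c3 c4. (\<forall>v. c1 * dJfun x v + c2 * dham v + c3 * dCas P1 x v + c4 * dCas P2 x v = 0)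
        \<longrightarrow> c1 = 0 \<and> c2 = 0 \<and> c3 = 0 \<and> c4 = 0)"
    using dJ dH dC1 dC2
    by (auto simp: indep_diff4_def frechet_derivative_at[symmetric] intro: differentiableI)
  have b_scaled_dCas: "(bb x j)\<^sup>2 * dCas j x v = v $ A j - 2 * aa x j / bb x j * v $ B j"
    if "bb x j \<noteq> 0" for j v
    using that by (simp add: dCas_def field_simps power2_eq_square power3_eq_cube)
  show ?thesis
  proof
    assume "indep_diff4 Jfun ham (Cas P1) (Cas P2) x"
    then show "bb x P1 + 2 * aa x P1 \<noteq> 0 \<or> bb x P2 + 2 * aa x P2 \<noteq> 0"
    proof (rule contrapos_pp)
      assume "\<not> (bb x P1 + 2 * aa x P1 \<noteq> 0 \<or> bb x P2 + 2 * aa x P2 \<noteq> 0)"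
      then have "2 * aa x P1 / bb x P1 = -1" "2 * aa x P2 / bb x P2 = -1"
        using b1 b2 by (auto simp: field_simps)
      \<comment> \<open>then dh = 2 b1^2 dC1 + 2 b2^2 dC2\<close>
      then have "\<forall>v. 0 * dJfun x v + 1 * dham v + (- 2 * (bb x P1)\<^sup>2) * dCas P1 x v
          + (- 2 * (bb x P2)\<^sup>2) * dCas P2 x v = 0"
        using b_scaled_dCas[OF b1] b_scaled_dCas[OF b2] by (simp add: dham_def algebra_simps)
      then show "\<not> indep_diff4 Jfun ham (Cas P1) (Cas P2) x"
        unfolding indep_iff by fastforce
    qed
  next
    assume cond: "bb x P1 + 2 * aa x P1 \<noteq> 0 \<or> bb x P2 + 2 * aa x P2 \<noteq> 0"
    show "indep_diff4 Jfun ham (Cas P1) (Cas P2) x"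
      unfolding indep_iff
    proof (intro allI impI)
      fix c1 c2 c3 c4 :: real
      assume "\<forall>v. c1 * dJfun x v + c2 * dham v + c3 * dCas P1 x v + c4 * dCas P2 x v = 0"
      then have h: "c1 * dJfun x (axis c 1) + c2 * dham (axis c 1) + c3 * dCas P1 x (axis c 1)
          + c4 * dCas P2 x (axis c 1) = 0" for c
        by blast
      have "EE x P1 P2 > 0" "SS x P1 P2 \<noteq> 0"
        using q by (auto simp: EE_def SS_def sgn_if)
      moreover have "c1 * (bb x P1 * bb x P2 * EE x P1 P2 * SS x P1 P2) = 0"
        using h[of "Q P1"] by (simp add: dJfun_def dham_def dCas_def axis_def)
      ultimately have c1: "c1 = 0" using b1 b2 by simp
      have c3: "c3 = - 2 * c2 * (bb x P1)\<^sup>2"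
        using h[of "A P1"] b1 by (simp add: dJfun_def dham_def dCas_def axis_def field_simps)
      have c4: "c4 = - 2 * c2 * (bb x P2)\<^sup>2"
        using h[of "A P2"] b2 by (simp add: dJfun_def dham_def dCas_def axis_def field_simps)
      have "c2 * (bb x P1 + 2 * aa x P1) = 0"
        using h[of "B P1"] b1 c1 unfolding c3
        by (simp add: dJfun_def dham_def dCas_def axis_def field_simps power2_eq_square power3_eq_cube)
      moreover have "c2 * (bb x P2 + 2 * aa x P2) = 0"
        using h[of "B P2"] b2 c1 unfolding c4
        by (simp add: dJfun_def dham_def dCas_def axis_def field_simps power2_eq_square power3_eq_cube)
      ultimately have "c2 = 0" using cond by auto
      then show "c1 = 0 \<and> c2 = 0 \<and> c3 = 0 \<and> c4 = 0" using c1 c3 c4 by simp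
    qed
  qed
qed

lemma indep_diff4_locus_eq:
  "{x \<in> Dom. indep_diff4 Jfun ham (Cas P1) (Cas P2) x} =
    {x. x $ B P1 \<noteq> 0 \<and> x $ B P2 \<noteq> 0 \<and> x $ Q P1 \<noteq> x $ Q P2 \<and>
      (x $ B P1 + 2 * x $ A P1 \<noteq> 0 \<or> x $ B P2 + 2 * x $ A P2 \<noteq> 0)}"
  using indep_diff4_Dom_iff by (auto simp: Dom_def aa_def bb_def qq_def)

lemma open_indep_diff4_locus: "open {x \<in> Dom. indep_diff4 Jfun ham (Cas P1) (Cas P2) x}"
  unfolding indep_diff4_locus_eq
  by (intro open_Collect_conj open_Collect_disj open_Collect_neq continuous_intros)

lemma Dom_subset_closure_indep_diff4_locus:
  "Dom \<subseteq> closure {x \<in> Dom. indep_diff4 Jfun ham (Cas P1) (Cas P2) x}"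
proof
  fix x assume x: "x \<in> Dom"
  show "x \<in> closure {x \<in> Dom. indep_diff4 Jfun ham (Cas P1) (Cas P2) x}"
    unfolding indep_diff4_locus_eq closure_approachable
  proof (intro allI impI)
    fix e :: real assume e: "e > 0"
    \<comment> \<open>if x is degenerate, moving a1 by e/2 breaks b1 + 2 a1 = 0 and nothing else\<close>
    define y where "y = (if x $ B P1 + 2 * x $ A P1 \<noteq> 0 \<or> x $ B P2 + 2 * x $ A P2 \<noteq> 0
      then x else x + (e / 2) *\<^sub>R axis (A P1) 1)"
    have "dist y x < e" using e by (simp add: y_def dist_norm)
    moreover have "y $ B P1 + 2 * y $ A P1 \<noteq> 0 \<or> y $ B P2 + 2 * y $ A P2 \<noteq> 0"
      using e by (auto simp: y_def axis_def)
    ultimately show "\<exists>y\<in>{x. x $ B P1 \<noteq> 0 \<and> x $ B P2 \<noteq> 0 \<and> x $ Q P1 \<noteq> x $ Q P2 \<and>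
        (x $ B P1 + 2 * x $ A P1 \<noteq> 0 \<or> x $ B P2 + 2 * x $ A P2 \<noteq> 0)}. dist y x < e"
      using x by (intro bexI[of _ y]) (auto simp: Dom_def bb_def qq_def y_def axis_def)
  qed
qed

theorem mainTheorem2:
  shows "(\<forall>x. qq x P1 \<noteq> qq x P2 \<longrightarrow> poisson Jfun ham x = 0)
       \<and> open {x \<in> Dom. indep_diff4 Jfun ham (Cas P1) (Cas P2) x}
       \<and> Dom \<subseteq> closure {x \<in> Dom. indep_diff4 Jfun ham (Cas P1) (Cas P2) x}"
  using poisson_Jfun_ham open_indep_diff4_locus Dom_subset_closure_indep_diff4_locus by blast

end
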